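(* Let $\mathcal{X}$ be a finite set, $\pi$ a probability mass function on $\mathcal{X}$ with full support, and $P$ a $\pi$-stationary transition matrix on $\mathcal{X}$. Let a group $\mathcal{G}$ act on $\mathcal{X}$ with orbits $\mathcal{O}_1,\dots,\mathcal{O}_k$, and let $G$ be the associated Gibbs orbit kernel. Then the projection chains of $GPG$ and of $P$ induced by the partition $(\mathcal{O}_i)_{i=1}^k$ coincide: $\overline{GPG}=\overline{P}$.
   Context: The Gibbs orbit kernel is $G(x,y)=\pi(y)/\pi(\mathcal{O}(x))$ if $y$ lies in the orbit $\mathcal{O}(x)$ of $x$, and $0$ otherwise, where $\pi(A)=\sum_{z\in A}\pi(z)$. For a transition matrix $K$ on $\mathcal{X}$, its projection chain induced by $(\mathcal{O}_i)_{i=1}^k$ is the $k\times k$ matrix $\overline{K}(i,j)=\frac{1}{\pi(\mathcal{O}_i)}\sum_{x\in\mathcal{O}_i,\,y\in\mathcal{O}_j}\pi(x)K(x,y)$. *)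

theory Defs
  imports "HOL-Analysis.Analysis" "HOL-Algebra.Group_Action"
begin

definition full_support_pmf :: "'b set \<Rightarrow> ('b \<Rightarrow> real) \<Rightarrow> bool" where
  "full_support_pmf X \<pi> \<longleftrightarrow> (\<forall>x\<in>X. \<pi> x > 0) \<and> (\<Sum>x\<in>X. \<pi> x) = 1"

definition transition_matrix :: "'b set \<Rightarrow> ('b \<Rightarrow> 'b \<Rightarrow> real) \<Rightarrow> bool" where
  "transition_matrix X P \<longleftrightarrow> (\<forall>x\<in>X. \<forall>y\<in>X. P x y \<ge> 0) \<and> (\<forall>x\<in>X. (\<Sum>y\<in>X. P x y) = 1)"

definition stationary :: "'b set \<Rightarrow> ('b \<Rightarrow> real) \<Rightarrow> ('b \<Rightarrow> 'b \<Rightarrow> real) \<Rightarrow> bool" where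
  "stationary X \<pi> P \<longleftrightarrow> (\<forall>y\<in>X. (\<Sum>x\<in>X. \<pi> x * P x y) = \<pi> y)"

definition kmult :: "'b set \<Rightarrow> ('b \<Rightarrow> 'b \<Rightarrow> real) \<Rightarrow> ('b \<Rightarrow> 'b \<Rightarrow> real) \<Rightarrow> 'b \<Rightarrow> 'b \<Rightarrow> real" where
  "kmult X K L x y = (\<Sum>z\<in>X. K x z * L z y)"

definition gibbs_orbit_kernel ::
  "('g, 'c) monoid_scheme \<Rightarrow> ('g \<Rightarrow> 'b \<Rightarrow> 'b) \<Rightarrow> ('b \<Rightarrow> real) \<Rightarrow> 'b \<Rightarrow> 'b \<Rightarrow> real" where
  "gibbs_orbit_kernel G \<phi> \<pi> x y =
     (if y \<in> orbit G \<phi> x then \<pi> y / (\<Sum>z\<in>orbit G \<phi> x. \<pi> z) else 0)"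

definition proj_chain :: "('b \<Rightarrow> real) \<Rightarrow> ('b \<Rightarrow> 'b \<Rightarrow> real) \<Rightarrow> 'b set \<Rightarrow> 'b set \<Rightarrow> real" where
  "proj_chain \<pi> K A B = (1 / (\<Sum>x\<in>A. \<pi> x)) * (\<Sum>x\<in>A. \<Sum>y\<in>B. \<pi> x * K x y)"

end

theory Submission
  imports Defs
begin

text \<open>Write \<open>G\<close> for the Gibbs orbit kernel and \<open>\<pi>\<^sub>A\<close> for \<open>\<pi>\<close> restricted to the orbit \<open>A\<close>.
  Since \<open>G\<close> redistributes mass only inside an orbit, proportionally to \<open>\<pi>\<close>, it fixes the row
  vector \<open>\<pi>\<^sub>A\<close> (\<open>\<pi>\<^sub>A G = \<pi>\<^sub>A\<close>) and the column vector \<open>1\<^sub>B\<close> (\<open>G 1\<^sub>B = 1\<^sub>B\<close>). The unnormalised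
  projection entry is \<open>\<pi>\<^sub>A K 1\<^sub>B\<close>, hence \<open>\<pi>\<^sub>A (G P G) 1\<^sub>B = \<pi>\<^sub>A P 1\<^sub>B\<close>.\<close>

lemma (in group_action) orbits_subset: "A \<in> orbits G E \<phi> \<Longrightarrow> A \<subseteq> E"
  using orbits_coverture by blast

lemma (in group_action) orbit_eq_of_mem_orbits:
  assumes "A \<in> orbits G E \<phi>" and "x \<in> A"
  shows "orbit G \<phi> x = A"
proof -
  have "x \<in> E" using assms orbits_subset by blast
  then have "orbit G \<phi> x \<in> orbits G E \<phi>" and "x \<in> orbit G \<phi> x"
    by (auto simp: orbits_def orbit_refl)
  then show ?thesis using disjoint_union[OF _ assms(1)] assms(2) by blast
qed

lemma sum_block_kmult3:
  fixes K P L :: "'b \<Rightarrow> 'b \<Rightarrow> real"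
  shows "(\<Sum>x\<in>A. \<Sum>y\<in>B. p x * kmult X (kmult X K P) L x y)
       = (\<Sum>z\<in>X. \<Sum>w\<in>X. (\<Sum>x\<in>A. p x * K x z) * P z w * (\<Sum>y\<in>B. L w y))"
proof -
  have "(\<Sum>x\<in>A. \<Sum>y\<in>B. p x * kmult X (kmult X K P) L x y)
      = (\<Sum>x\<in>A. \<Sum>y\<in>B. \<Sum>w\<in>X. \<Sum>z\<in>X. p x * K x z * P z w * L w y)"
    by (simp add: kmult_def sum_distrib_left sum_distrib_right mult.assoc)
  also have "\<dots> = (\<Sum>x\<in>A. \<Sum>w\<in>X. \<Sum>z\<in>X. \<Sum>y\<in>B. p x * K x z * P z w * L w y)"
    by (simp add: sum.swap[of _ B])
  also have "\<dots> = (\<Sum>w\<in>X. \<Sum>z\<in>X. \<Sum>x\<in>A. \<Sum>y\<in>B. p x * K x z * P z w * L w y)"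
    by (simp add: sum.swap[of _ A])
  also have "\<dots> = (\<Sum>z\<in>X. \<Sum>w\<in>X. \<Sum>x\<in>A. \<Sum>y\<in>B. p x * K x z * P z w * L w y)"
    by (rule sum.swap)
  also have "\<dots> = (\<Sum>z\<in>X. \<Sum>w\<in>X. (\<Sum>x\<in>A. p x * K x z) * P z w * (\<Sum>y\<in>B. L w y))"
    by (simp add: sum_distrib_left sum_distrib_right mult.assoc sum.swap[of _ A B])
  finally show ?thesis .
qed

lemma proj_chain_kmult3_eq:
  fixes K P L :: "'b \<Rightarrow> 'b \<Rightarrow> real"
  assumes "finite X" and "A \<subseteq> X" and "B \<subseteq> X"
    and left_fixed: "\<And>z. z \<in> X \<Longrightarrow> (\<Sum>x\<in>A. \<pi> x * K x z) = (if z \<in> A then \<pi> z else 0)"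
    and right_fixed: "\<And>w. w \<in> X \<Longrightarrow> (\<Sum>y\<in>B. L w y) = (if w \<in> B then 1 else 0)"
  shows "proj_chain \<pi> (kmult X (kmult X K P) L) A B = proj_chain \<pi> P A B"
proof -
  have "(\<Sum>x\<in>A. \<Sum>y\<in>B. \<pi> x * kmult X (kmult X K P) L x y)
      = (\<Sum>z\<in>X. \<Sum>w\<in>X. (if z \<in> A then \<pi> z else 0) * P z w * (if w \<in> B then 1 else 0))"
    by (simp add: sum_block_kmult3 left_fixed right_fixed)
  also have "\<dots> = (\<Sum>z\<in>X. if z \<in> A then (\<Sum>w\<in>X. if w \<in> B then \<pi> z * P z w else 0) else 0)"
    by (intro sum.cong refl) (auto intro: sum.cong)
  also have "\<dots> = (\<Sum>z\<in>A. \<Sum>w\<in>B. \<pi> z * P z w)"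
    using assms(1-3) by (simp add: sum.If_cases Int_absorb1 Int_absorb2)
  finally show ?thesis unfolding proj_chain_def by simp
qed

context group_action
begin

lemma gibbs_orbit_kernel_weighted_sum_orbit:
  assumes "A \<in> orbits G E \<phi>" and "(\<Sum>x\<in>A. \<pi> x) \<noteq> 0"
  shows "(\<Sum>x\<in>A. \<pi> x * gibbs_orbit_kernel G \<phi> \<pi> x z) = (if z \<in> A then \<pi> z else 0)"
proof -
  have "(\<Sum>x\<in>A. \<pi> x * gibbs_orbit_kernel G \<phi> \<pi> x z)
      = (\<Sum>x\<in>A. \<pi> x * (if z \<in> A then \<pi> z / (\<Sum>x\<in>A. \<pi> x) else 0))"
    using orbit_eq_of_mem_orbits[OF assms(1)] by (intro sum.cong) (simp_all add: gibbs_orbit_kernel_def)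
  also have "\<dots> = (if z \<in> A then \<pi> z else 0)"
    using assms(2) by (simp add: sum_distrib_right[symmetric])
  finally show ?thesis .
qed

lemma gibbs_orbit_kernel_sum_orbit:
  assumes "B \<in> orbits G E \<phi>" and "(\<Sum>y\<in>B. \<pi> y) \<noteq> 0" and "w \<in> E"
  shows "(\<Sum>y\<in>B. gibbs_orbit_kernel G \<phi> \<pi> w y) = (if w \<in> B then 1 else 0)"
proof (cases "w \<in> B")
  case True
  then have "(\<Sum>y\<in>B. gibbs_orbit_kernel G \<phi> \<pi> w y) = (\<Sum>y\<in>B. \<pi> y / (\<Sum>y\<in>B. \<pi> y))"
    using orbit_eq_of_mem_orbits[OF assms(1)] by (simp add: gibbs_orbit_kernel_def)
  also have "\<dots> = 1"
    using assms(2) by (simp add: sum_divide_distrib[symmetric])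
  finally show ?thesis using True by simp
next
  case False
  have orbit_w: "orbit G \<phi> w \<in> orbits G E \<phi>"
    using assms(3) by (auto simp: orbits_def)
  have "y \<notin> orbit G \<phi> w" if "y \<in> B" for y
  proof
    assume "y \<in> orbit G \<phi> w"
    then have "orbit G \<phi> y = orbit G \<phi> w" by (rule orbit_eq_of_mem_orbits[OF orbit_w])
    moreover have "orbit G \<phi> y = B" by (rule orbit_eq_of_mem_orbits[OF assms(1) that])
    ultimately have "orbit G \<phi> w = B" by (rule subst)
    then show False using False orbit_refl[OF assms(3)] by blast
  qed
  then have "(\<Sum>y\<in>B. gibbs_orbit_kernel G \<phi> \<pi> w y) = 0"
    by (intro sum.neutral) (simp add: gibbs_orbit_kernel_def)
  then show ?thesis using False by simp
qed

end

theorem proposition2p4: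
  fixes X :: "'b set" and \<pi> :: "'b \<Rightarrow> real" and P :: "'b \<Rightarrow> 'b \<Rightarrow> real"
    and G :: "('g, 'c) monoid_scheme" and \<phi> :: "'g \<Rightarrow> 'b \<Rightarrow> 'b"
  assumes "finite X"
    and "full_support_pmf X \<pi>"
    and "transition_matrix X P"
    and "stationary X \<pi> P"
    and "group_action G X \<phi>"
    and "A \<in> orbits G X \<phi>" and "B \<in> orbits G X \<phi>"
  shows "proj_chain \<pi> (kmult X (kmult X (gibbs_orbit_kernel G \<phi> \<pi>) P) (gibbs_orbit_kernel G \<phi> \<pi>)) A B
         = proj_chain \<pi> P A B"
proof -
  interpret group_action G X \<phi> by fact
  have orbit_mass_nonzero: "(\<Sum>x\<in>C. \<pi> x) \<noteq> 0" if "C \<in> orbits G X \<phi>" for C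
  proof -
    have "(\<Sum>x\<in>C. \<pi> x) > 0"
    proof (rule sum_pos)
      show "finite C" using orbits_subset[OF that] \<open>finite X\<close> finite_subset by blast
      show "C \<noteq> {}" using that orbit_refl by (auto simp: orbits_def)
      show "\<And>x. x \<in> C \<Longrightarrow> \<pi> x > 0"
        using orbits_subset[OF that] assms(2) by (auto simp: full_support_pmf_def)
    qed
    then show ?thesis by simp
  qed
  show ?thesis
  proof (rule proj_chain_kmult3_eq)
    show "finite X" "A \<subseteq> X" "B \<subseteq> X"
      using assms(1,6,7) orbits_subset by auto
    show "(\<Sum>x\<in>A. \<pi> x * gibbs_orbit_kernel G \<phi> \<pi> x z) = (if z \<in> A then \<pi> z else 0)" for z
      using gibbs_orbit_kernel_weighted_sum_orbit[OF assms(6) orbit_mass_nonzero[OF assms(6)]] .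
    show "(\<Sum>y\<in>B. gibbs_orbit_kernel G \<phi> \<pi> w y) = (if w \<in> B then 1 else 0)" if "w \<in> X" for w
      using gibbs_orbit_kernel_sum_orbit[OF assms(7) orbit_mass_nonzero[OF assms(7)] that] .
  qed
qed

end
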